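(* Assume $s>2c$, and let $f^*=f^{(s-c)}$ be the voting rule with parameter $r=s-c$ (thresholds $a=b\to\infty$). Then for every admissible attack $g$, $$\gamma(f^*,g)\ge (s-2c)\,I,$$ where $I=\min\{I_0,I_1\}$.
   Context: A binary state $\theta\in\{0,1\}$ is observed by $s$ sensors indexed by $\mathcal{S}=\{1,\dots,s\}$; at each time $k\in\mathbb{Z}^+$ sensor $i$ produces a real observation $x_i(k)$. Let $\mu,\nu$ be mutually absolutely continuous Borel probability measures on $\mathbb{R}$. Under $\mathbb{P}_\theta$ all $x_i(k)$ are independent, with law $\nu$ if $\theta=0$ and $\mu$ if $\theta=1$. Let $I_1=\int\log\frac{d\mu}{d\nu}\,d\mu$, $I_0=-\int\log\frac{d\mu}{d\nu}\,d\nu$, assumed $0<I_0,I_1<\infty$, and $I=\min\{I_0,I_1\}$. Attack model: an attacker compromises a fixed set $\mathcal{C}\subseteq\mathcal{S}$ with $|\mathcal{C}|=c$ (the detector knows $c$ but not $\mathcal{C}$). The fusion center receives $x'(k)=x(k)+x^a(k)$, where $x^a(k)\in\mathbb{R}^s$, the union over $k$ of the supports of $x^a(k)$ equals $\mathcal{C}$, and $x^a(k)=g(X_{\mathcal{C}}(k),X^a(k-1),\theta,k)$ is a measurable (possibly randomized) function of the true observations of the compromised sensors up to time $k$, the previously injected vectors, the true state $\theta$, and $k$. Such $g$ is an admissible attack; $\mathbb{P}^g_\theta,\mathbb{E}^g_\theta$ denote probability and expectation of the manipulated observations. A detection strategy is $f=(f_1,f_2,\dots)$ with $f_k$ mapping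 $x'(1),\dots,x'(k)$ to $\{\text{continue},0,1\}$; stopping time $T$ is the first $k$ with $f_k\neq\text{continue}$, decision $f_T$. With $\alpha=\mathbb{P}^g_0[f_T=1]$, $\beta=\mathbb{P}^g_1[f_T=0]$, $D(T)=\max_\theta\mathbb{E}^g_\theta[T]$, the performance is $\gamma(f,g)=\lim_{\alpha=\beta\to0^+}\frac{\log(1/\alpha)}{D(T)}$, the limit taken along the family of tests for which $\alpha=\beta\to0$. Voting rule $f^{(r)}$ ($s/2<r\le s$): with $S_i(n)=\sum_{k=1}^n\log\frac{d\mu}{d\nu}(x'_i(k))$ computed from the received observations, thresholds $a,b>0$, let $\tau^+_i(b)=\inf\{k:S_i(k)\ge b\}$, $\tau^-_i(a)=\inf\{k:S_i(k)\le -a\}$, and $\tau^\pm_{(j)}$ the $j$-th smallest of these over $i\in\mathcal{S}$. The rule stops at $\min\{\tau^-_{(r)}(a),\tau^+_{(r)}(b)\}$, deciding $0$ if $\tau^-_{(r)}(a)<\tau^+_{(r)}(b)$, $1$ if $\tau^+_{(r)}(b)<\tau^-_{(r)}(a)$, and $0$ or $1$ with probability $1/2$ each if equal. *)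

theory Defs
  imports "HOL-Probability.Probability"
begin

(* Observation histories are functions  x :: nat => nat => real,  x k i = observation of
   sensor i at time k.  Sensors are 1..s, times are 1,2,...  (time 0 entries are dummies).
   The state theta is a natural number in {0,1}. *)

definition hist_space :: "(nat \<Rightarrow> nat \<Rightarrow> real) measure" where
  "hist_space = PiM UNIV (\<lambda>_. PiM UNIV (\<lambda>_. (borel :: real measure)))"

definition vec_space :: "(nat \<Rightarrow> real) measure" where
  "vec_space = PiM UNIV (\<lambda>_. (borel :: real measure))"

definition obs_law :: "real measure \<Rightarrow> real measure \<Rightarrow> nat \<Rightarrow> real measure" where
  "obs_law \<mu> \<nu> \<theta> = (if \<theta> = 1 then \<mu> else \<nu>)"

(* probability space: i.i.d. true observations (all sensors, all times) times the
   attacker's private randomness R *)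
definition sample_space ::
  "real measure \<Rightarrow> real measure \<Rightarrow> 'r measure \<Rightarrow> nat \<Rightarrow> ((nat \<Rightarrow> nat \<Rightarrow> real) \<times> 'r) measure" where
  "sample_space \<mu> \<nu> R \<theta> =
     PiM UNIV (\<lambda>_::nat. PiM UNIV (\<lambda>_::nat. obs_law \<mu> \<nu> \<theta>)) \<Otimes>\<^sub>M R"

definition comp_hist :: "nat set \<Rightarrow> (nat \<Rightarrow> nat \<Rightarrow> real) \<Rightarrow> nat \<Rightarrow> (nat \<Rightarrow> nat \<Rightarrow> real)" where
  "comp_hist C x k = (\<lambda>t i. if 1 \<le> t \<and> t \<le> k \<and> i \<in> C then x t i else 0)"

(* inj_prefix ... k = the injected vectors at times 1..k-1 (zero elsewhere);
   attack function g theta k (compromised history up to k) (previous injections) omega *)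
primrec inj_prefix ::
  "(nat \<Rightarrow> nat \<Rightarrow> (nat \<Rightarrow> nat \<Rightarrow> real) \<Rightarrow> (nat \<Rightarrow> nat \<Rightarrow> real) \<Rightarrow> 'r \<Rightarrow> (nat \<Rightarrow> real))
    \<Rightarrow> nat \<Rightarrow> nat set \<Rightarrow> (nat \<Rightarrow> nat \<Rightarrow> real) \<Rightarrow> 'r \<Rightarrow> nat \<Rightarrow> (nat \<Rightarrow> nat \<Rightarrow> real)" where
  "inj_prefix g \<theta> C x \<omega> 0 = (\<lambda>_ _. 0)"
| "inj_prefix g \<theta> C x \<omega> (Suc k) =
     (let P = inj_prefix g \<theta> C x \<omega> k in
      if k = 0 then P else P(k := g \<theta> k (comp_hist C x k) P \<omega>))"

definition attack_vec where
  "attack_vec g \<theta> C x \<omega> k = inj_prefix g \<theta> C x \<omega> (Suc k) k"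

definition received where
  "received g \<theta> C x \<omega> = (\<lambda>k i. x k i + attack_vec g \<theta> C x \<omega> k i)"

definition measurable_attack ::
  "'r measure \<Rightarrow> (nat \<Rightarrow> nat \<Rightarrow> (nat \<Rightarrow> nat \<Rightarrow> real) \<Rightarrow> (nat \<Rightarrow> nat \<Rightarrow> real) \<Rightarrow> 'r \<Rightarrow> (nat \<Rightarrow> real)) \<Rightarrow> bool" where
  "measurable_attack R g \<longleftrightarrow>
     (\<forall>\<theta>\<in>{0,1}. \<forall>k. (\<lambda>(h, p, \<omega>). g \<theta> k h p \<omega>)
        \<in> measurable (hist_space \<Otimes>\<^sub>M (hist_space \<Otimes>\<^sub>M R)) vec_space)"

definition attack_support where
  "attack_support g \<theta> C x \<omega> = (\<Union>k\<in>{1..}. {i. attack_vec g \<theta> C x \<omega> k i \<noteq> 0})"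

definition llr_sum :: "(real \<Rightarrow> real) \<Rightarrow> (nat \<Rightarrow> nat \<Rightarrow> real) \<Rightarrow> nat \<Rightarrow> nat \<Rightarrow> real" where
  "llr_sum L y i n = (\<Sum>k=1..n. L (y k i))"

definition tau_up :: "(real \<Rightarrow> real) \<Rightarrow> (nat \<Rightarrow> nat \<Rightarrow> real) \<Rightarrow> real \<Rightarrow> nat \<Rightarrow> enat" where
  "tau_up L y b i = (if \<exists>k\<ge>1. b \<le> llr_sum L y i k
                     then enat (LEAST k. k \<ge> 1 \<and> b \<le> llr_sum L y i k) else \<infinity>)"

definition tau_down :: "(real \<Rightarrow> real) \<Rightarrow> (nat \<Rightarrow> nat \<Rightarrow> real) \<Rightarrow> real \<Rightarrow> nat \<Rightarrow> enat" where
  "tau_down L y a i = (if \<exists>k\<ge>1. llr_sum L y i k \<le> - a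
                     then enat (LEAST k. k \<ge> 1 \<and> llr_sum L y i k \<le> - a) else \<infinity>)"

definition order_stat :: "nat \<Rightarrow> nat \<Rightarrow> (nat \<Rightarrow> enat) \<Rightarrow> enat" where
  "order_stat s j t = sort (map t [1..<s+1]) ! (j - 1)"

definition vote_up where "vote_up L s r b y = order_stat s r (tau_up L y b)"
definition vote_down where "vote_down L s r a y = order_stat s r (tau_down L y a)"
definition vote_T where "vote_T L s r a b y = min (vote_down L s r a y) (vote_up L s r b y)"

(* probability of a given (wrong) decision: the wrong side crosses strictly first, or a finite
   tie broken by an independent fair coin in favour of the wrong side *)
definition dec_prob :: "'a measure \<Rightarrow> ('a \<Rightarrow> enat) \<Rightarrow> ('a \<Rightarrow> enat) \<Rightarrow> real" where
  "dec_prob M tw tr = measure M {z \<in> space M. tw z < tr z}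
                     + 1/2 * measure M {z \<in> space M. tw z = tr z \<and> tw z \<noteq> \<infinity>}"

definition alpha_err where
  "alpha_err \<mu> \<nu> R g C L s r a b =
     dec_prob (sample_space \<mu> \<nu> R 0)
       (\<lambda>z. vote_up L s r b (received g 0 C (fst z) (snd z)))
       (\<lambda>z. vote_down L s r a (received g 0 C (fst z) (snd z)))"

definition beta_err where
  "beta_err \<mu> \<nu> R g C L s r a b =
     dec_prob (sample_space \<mu> \<nu> R 1)
       (\<lambda>z. vote_down L s r a (received g 1 C (fst z) (snd z)))
       (\<lambda>z. vote_up L s r b (received g 1 C (fst z) (snd z)))"

definition exp_T where
  "exp_T \<mu> \<nu> R g C L s r a b \<theta> =
     (\<integral>\<^sup>+ z. ennreal_of_enat (vote_T L s r a b (received g \<theta> C (fst z) (snd z)))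
        \<partial>sample_space \<mu> \<nu> R \<theta>)"

definition delay where
  "delay \<mu> \<nu> R g C L s r a b = max (exp_T \<mu> \<nu> R g C L s r a b 0) (exp_T \<mu> \<nu> R g C L s r a b 1)"

definition perf_ratio where
  "perf_ratio \<mu> \<nu> R g C L s r a b =
     (let e = max (alpha_err \<mu> \<nu> R g C L s r a b) (beta_err \<mu> \<nu> R g C L s r a b) in
      (if e = 0 then \<infinity> else ereal (- ln e)) / enn2ereal (delay \<mu> \<nu> R g C L s r a b))"

end

(* Under either state the log-likelihood-ratio sums of the s - c honest sensors are not touched
   by the attack; they are independent random walks whose increments Lambda, seen under the
   true law P, satisfy E exp Lambda = 1 and E Lambda = -I_theta.  The function
   psi t = E exp (t Lambda) is convex with psi 0 = psi 1 = 1 and psi' 0 = -I_theta, so psi < 1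
   on (0, 1) and psi t <= 1 - t (I_theta - delta) for small t.
   A wrong decision of the rule with r = s - c requires at least s - 2c honest walks to reach
   the wrong threshold a; by independence and the Chernoff bound at t = 1 - delta this has
   probability O(exp (-(s - 2c)(1 - delta) a)).  The rule has stopped as soon as every honest
   walk has reached the correct threshold, and a Chernoff bound at small t shows that this
   takes expected time a / (I_theta - delta) + O(1).  Hence the performance ratio is
   eventually at least (s - 2c)(1 - delta)(I - delta), for every small delta > 0. *)

theory Submission
  imports Defs "HOL-Real_Asymp.Real_Asymp"
begin

section \<open>Products over i.i.d. arrays\<close>

lemma nn_integral_PiM_prod:
  fixes M :: "'i \<Rightarrow> 'a measure"
  assumes M: "\<And>i. prob_space (M i)" and K: "finite K"
    and F: "\<And>k. k \<in> K \<Longrightarrow> F k \<in> borel_measurable (M k)"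
  shows "(\<integral>\<^sup>+x. (\<Prod>k\<in>K. F k (x k)) \<partial>PiM UNIV M) = (\<Prod>k\<in>K. \<integral>\<^sup>+v. F k v \<partial>M k)"
proof -
  interpret product_prob_space M UNIV
    by (intro product_prob_spaceI M)
  have "(\<integral>\<^sup>+x. (\<Prod>k\<in>K. F k (x k)) \<partial>PiM UNIV M) =
        (\<integral>\<^sup>+x. (\<lambda>y. \<Prod>k\<in>K. F k (y k)) (restrict x K) \<partial>PiM UNIV M)"
    by (intro nn_integral_cong) auto
  also have "\<dots> = (\<integral>\<^sup>+y. (\<Prod>k\<in>K. F k (y k)) \<partial>distr (PiM UNIV M) (PiM K M) (\<lambda>x. restrict x K))"
    by (rule nn_integral_distr[symmetric, OF measurable_restrict_subset])
       (use F K in \<open>auto intro!: borel_measurable_prod_ennreal\<close>)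
  also have "\<dots> = (\<integral>\<^sup>+y. (\<Prod>k\<in>K. F k (y k)) \<partial>PiM K M)"
    by (subst distr_PiM_restrict_finite) (use K in auto)
  also have "\<dots> = (\<Prod>k\<in>K. \<integral>\<^sup>+v. F k v \<partial>M k)"
    by (rule product_nn_integral_prod) (use K F in auto)
  finally show ?thesis .
qed

lemma measurable_PiM_component2:
  "(\<lambda>x. x a b) \<in> measurable (PiM UNIV (\<lambda>_. PiM UNIV (\<lambda>_. P))) P"
proof -
  have "(\<lambda>x. x a) \<in> measurable (PiM UNIV (\<lambda>_. PiM UNIV (\<lambda>_. P))) (PiM UNIV (\<lambda>_. P))"
    by (rule measurable_component_singleton) simp
  moreover have "(\<lambda>y. y b) \<in> measurable (PiM UNIV (\<lambda>_. P)) P"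
    by (rule measurable_component_singleton) simp
  ultimately show ?thesis by (rule measurable_compose)
qed

lemma nn_integral_iid_array_prod:
  fixes P :: "'a measure" and Q :: "('i \<times> 'j) set"
  assumes P: "prob_space P" and Q: "finite Q" and g: "g \<in> borel_measurable P"
  shows "(\<integral>\<^sup>+x. (\<Prod>q\<in>Q. g (x (fst q) (snd q))) \<partial>PiM UNIV (\<lambda>_::'i. PiM UNIV (\<lambda>_::'j. P)))
         = (\<integral>\<^sup>+v. g v \<partial>P) ^ card Q"
proof -
  define K where "K = fst ` Q"
  define B where "B k = {i. (k, i) \<in> Q}" for k
  have K: "finite K" using Q by (simp add: K_def)
  have B: "finite (B k)" for k
    using Q unfolding B_def by (rule finite_subset[rotated, OF finite_imageI[of Q snd]]) force
  have QS: "Q = Sigma K B" by (auto simp: K_def B_def image_iff) force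
  have "(\<integral>\<^sup>+x. (\<Prod>q\<in>Q. g (x (fst q) (snd q))) \<partial>PiM UNIV (\<lambda>_::'i. PiM UNIV (\<lambda>_::'j. P)))
     = (\<integral>\<^sup>+x. (\<Prod>k\<in>K. (\<lambda>v. \<Prod>i\<in>B k. g (v i)) (x k)) \<partial>PiM UNIV (\<lambda>_::'i. PiM UNIV (\<lambda>_::'j. P)))"
    unfolding QS by (intro nn_integral_cong) (simp add: prod.Sigma K B split_beta)
  also have "\<dots> = (\<Prod>k\<in>K. \<integral>\<^sup>+v. (\<Prod>i\<in>B k. g (v i)) \<partial>PiM UNIV (\<lambda>_::'j. P))"
    by (rule nn_integral_PiM_prod) (use K g P in \<open>auto intro!: prob_space_PiM borel_measurable_prod_ennreal\<close>)
  also have "\<dots> = (\<Prod>k\<in>K. (\<integral>\<^sup>+v. g v \<partial>P) ^ card (B k))"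
    by (intro prod.cong refl, subst nn_integral_PiM_prod) (use B g P in auto)
  also have "\<dots> = (\<integral>\<^sup>+v. g v \<partial>P) ^ card Q"
    unfolding QS by (subst card_SigmaI) (use K B in \<open>auto simp: power_sum\<close>)
  finally show ?thesis .
qed

lemma nn_integral_iid_array_prod_blocks:
  fixes P :: "'a measure" and J :: "'i set" and D :: "'i \<Rightarrow> 'j set"
  assumes P: "prob_space P" and J: "finite J" and D: "\<And>i. i \<in> J \<Longrightarrow> finite (D i)"
    and g: "g \<in> borel_measurable P"
  shows "(\<integral>\<^sup>+x. (\<Prod>i\<in>J. c * (\<Prod>j\<in>D i. g (x j i))) \<partial>PiM UNIV (\<lambda>_::'j. PiM UNIV (\<lambda>_::'i. P)))
         = (\<Prod>i\<in>J. c * (\<integral>\<^sup>+v. g v \<partial>P) ^ card (D i))"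
proof -
  define Q where "Q = (\<lambda>(i, j). (j, i)) ` Sigma J D"
  have inj: "inj_on (\<lambda>(i::'i, j::'j). (j, i)) (Sigma J D)" by (auto simp: inj_on_def)
  have Q: "finite Q" using J D by (auto simp: Q_def)
  have card_Q: "card Q = (\<Sum>i\<in>J. card (D i))"
    unfolding Q_def using J D by (subst card_image[OF inj]) auto
  have prod_Q: "(\<Prod>q\<in>Q. g (x (fst q) (snd q))) = (\<Prod>i\<in>J. \<Prod>j\<in>D i. g (x j i))" for x
    unfolding Q_def using J D by (subst prod.reindex[OF inj]) (simp add: prod.Sigma split_beta)
  have "(\<integral>\<^sup>+x. (\<Prod>i\<in>J. c * (\<Prod>j\<in>D i. g (x j i))) \<partial>PiM UNIV (\<lambda>_::'j. PiM UNIV (\<lambda>_::'i. P)))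
      = (\<integral>\<^sup>+x. c ^ card J * (\<Prod>q\<in>Q. g (x (fst q) (snd q))) \<partial>PiM UNIV (\<lambda>_::'j. PiM UNIV (\<lambda>_::'i. P)))"
    by (intro nn_integral_cong) (simp add: prod_Q prod.distrib)
  also have "\<dots> = c ^ card J * (\<integral>\<^sup>+v. g v \<partial>P) ^ card Q"
    using P Q g
    by (subst nn_integral_cmult)
       (auto simp: nn_integral_iid_array_prod
             intro!: borel_measurable_prod_ennreal measurable_compose[OF measurable_PiM_component2 g])
  also have "\<dots> = (\<Prod>i\<in>J. c * (\<integral>\<^sup>+v. g v \<partial>P) ^ card (D i))"
    by (simp add: card_Q prod.distrib power_sum)
  finally show ?thesis .
qed

section \<open>Tail sums and decision probabilities\<close>

lemma ennreal_of_enat_le_suminf: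
  fixes F :: "nat \<Rightarrow> ennreal"
  assumes "\<And>n. enat n < T \<Longrightarrow> 1 \<le> F n"
  shows "ennreal_of_enat T \<le> suminf F"
proof -
  have le: "of_nat t \<le> suminf F" if "enat t \<le> T" for t
  proof -
    have "(of_nat t :: ennreal) = (\<Sum>n<t. 1)" by simp
    also have "\<dots> \<le> (\<Sum>n<t. F n)"
      using that by (intro sum_mono assms) (auto intro: less_le_trans[of _ "enat t"])
    also have "\<dots> \<le> suminf F"
      by (intro sum_le_suminf summableI) auto
    finally show ?thesis .
  qed
  show ?thesis
  proof (cases T)
    case (enat t)
    then show ?thesis using le[of t] by simp
  next
    case infinity
    have "(SUP n. of_nat n :: ennreal) \<le> suminf F"
      using le by (intro SUP_least) (simp add: infinity)
    then show ?thesis using infinity by (simp add: ennreal_SUP_of_nat_eq_top)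
  qed
qed

lemma obtain_power_le_inverse:
  fixes A q :: real
  assumes A: "1 \<le> A" and q: "0 < q" "q < 1"
  obtains n where "real n \<le> ln A / (- ln q) + 1" "A * q ^ n \<le> 1"
proof
  define n where "n = nat \<lceil>ln A / (- ln q)\<rceil>"
  have x0: "0 \<le> ln A / (- ln q)"
    using A q by (intro divide_nonneg_pos) auto
  then show "real n \<le> ln A / (- ln q) + 1"
    unfolding n_def by linarith
  have "ln A / (- ln q) \<le> real n"
    unfolding n_def by linarith
  moreover have "0 < - ln q"
    using q by simp
  ultimately have "ln A \<le> real n * (- ln q)"
    by (metis pos_divide_le_eq)
  then have "exp (ln A + real n * ln q) \<le> 1"
    by simp
  also have "exp (ln A + real n * ln q) = A * q ^ n"
    using A q by (simp add: exp_add exp_of_nat_mult)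
  finally show "A * q ^ n \<le> 1" .
qed

lemma suminf_le_geometric_tail:
  fixes f :: "nat \<Rightarrow> ennreal" and A q :: real
  assumes f1: "\<And>n. f n \<le> 1" and fA: "\<And>n. f n \<le> ennreal (A * q ^ n)"
    and A: "1 \<le> A" and q: "0 < q" "q < 1"
  shows "suminf f \<le> ennreal (ln A / (- ln q) + 1 + 1 / (1 - q))"
proof -
  obtain n0 where n0: "real n0 \<le> ln A / (- ln q) + 1" "A * q ^ n0 \<le> 1"
    using obtain_power_le_inverse[OF A q] .
  have "suminf f = (\<Sum>j. f (j + n0)) + (\<Sum>j<n0. f j)"
    by (intro suminf_offset summableI)
  also have "(\<Sum>j<n0. f j) \<le> (\<Sum>j<n0. 1)"
    by (intro sum_mono f1)
  also have "(\<Sum>j. f (j + n0)) \<le> (\<Sum>j. ennreal (q ^ j))"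
  proof (intro suminf_le summableI)
    fix j
    have "A * q ^ (j + n0) = (A * q ^ n0) * q ^ j" by (simp add: power_add)
    also have "\<dots> \<le> q ^ j"
      using n0(2) q mult_right_mono[of "A * q ^ n0" 1 "q ^ j"] by simp
    finally show "f (j + n0) \<le> ennreal (q ^ j)"
      by (rule order_trans[OF fA ennreal_leI])
  qed
  also have "(\<Sum>j. ennreal (q ^ j)) = ennreal (1 / (1 - q))"
    using q by (intro sums_unique[symmetric]) (simp add: geometric_sums)
  also have "ennreal (1 / (1 - q)) + (\<Sum>j<n0. 1) = ennreal (1 / (1 - q) + real n0)"
    using q by (simp add: ennreal_of_nat_eq_real_of_nat)
  also have "\<dots> \<le> ennreal (ln A / (- ln q) + 1 + 1 / (1 - q))"
    using n0(1) by (intro ennreal_leI) simp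
  finally show ?thesis by (simp add: add_mono)
qed

lemma nn_integral_pair_fst:
  assumes R: "prob_space R" and f: "f \<in> borel_measurable M"
  shows "(\<integral>\<^sup>+z. f (fst z) \<partial>(M \<Otimes>\<^sub>M R)) = (\<integral>\<^sup>+x. f x \<partial>M)"
proof -
  have "(\<integral>\<^sup>+x. f x \<partial>M) = (\<integral>\<^sup>+x. f x \<partial>distr (M \<Otimes>\<^sub>M R) M fst)"
    using prob_space.distr_pair_fst[OF R, of M] by simp
  also have "\<dots> = (\<integral>\<^sup>+z. f (fst z) \<partial>(M \<Otimes>\<^sub>M R))"
    by (rule nn_integral_distr) (use f in auto)
  finally show ?thesis ..
qed

lemma emeasure_pair_fst:
  assumes R: "prob_space R" and A: "A \<in> sets M"
  shows "emeasure (M \<Otimes>\<^sub>M R) {z\<in>space (M \<Otimes>\<^sub>M R). fst z \<in> A} = emeasure M A"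
proof -
  have "emeasure M A = emeasure (distr (M \<Otimes>\<^sub>M R) M fst) A"
    using prob_space.distr_pair_fst[OF R, of M] by simp
  also have "\<dots> = emeasure (M \<Otimes>\<^sub>M R) (fst -` A \<inter> space (M \<Otimes>\<^sub>M R))"
    by (rule emeasure_distr) (use A in auto)
  also have "fst -` A \<inter> space (M \<Otimes>\<^sub>M R) = {z\<in>space (M \<Otimes>\<^sub>M R). fst z \<in> A}"
    by auto
  finally show ?thesis ..
qed

(* A and B need not be measurable: measure is 0 outside sets M. *)
lemma (in finite_measure) measure_add_le_of_disjoint:
  assumes "A \<inter> B = {}" "A \<union> B \<subseteq> E" "E \<in> sets M"
  shows "measure M A + measure M B \<le> measure M E"
proof (cases "A \<in> sets M \<and> B \<in> sets M")
  case True
  then have "measure M A + measure M B = measure M (A \<union> B)"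
    using assms(1) by (simp add: finite_measure_Union)
  also have "\<dots> \<le> measure M E"
    using assms(2,3) by (rule finite_measure_mono)
  finally show ?thesis .
next
  case False
  then have "measure M A = 0 \<or> measure M B = 0"
    by (auto simp: measure_notin_sets)
  moreover have "measure M A \<le> measure M E" "measure M B \<le> measure M E"
    using assms(2,3) by (auto intro: finite_measure_mono)
  ultimately show ?thesis by auto
qed

lemma dec_prob_nonneg: "0 \<le> dec_prob M tw tr"
  unfolding dec_prob_def by simp

lemma dec_prob_le_measure:
  assumes M: "prob_space M" and E: "E \<in> sets M" and W: "AE z in M. tw z \<noteq> \<infinity> \<longrightarrow> z \<in> E"
  shows "dec_prob M tw tr \<le> measure M E"
proof -
  interpret prob_space M by (rule M)
  obtain N where N: "{z\<in>space M. \<not> (tw z \<noteq> \<infinity> \<longrightarrow> z \<in> E)} \<subseteq> N" "N \<in> null_sets M"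
    using W by (auto elim!: AE_E simp: null_sets_def)
  define A1 where "A1 = {z\<in>space M. tw z < tr z}"
  define A2 where "A2 = {z\<in>space M. tw z = tr z \<and> tw z \<noteq> \<infinity>}"
  have "u < v \<Longrightarrow> u \<noteq> \<infinity>" for u v :: enat
    by (cases u) auto
  then have "A1 \<union> A2 \<subseteq> E \<union> N"
    using N(1) unfolding A1_def A2_def by blast
  have "dec_prob M tw tr \<le> measure M A1 + measure M A2"
    unfolding dec_prob_def A1_def A2_def by simp
  also have "\<dots> \<le> measure M (E \<union> N)"
    using \<open>A1 \<union> A2 \<subseteq> E \<union> N\<close> E N by (intro measure_add_le_of_disjoint) (auto simp: A1_def A2_def)
  also have "\<dots> = measure M E"
    using E N by (simp add: measure_Un_null_set)
  finally show ?thesis .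
qed

section \<open>Logarithmic ratios\<close>

lemma exp_mult_le_convex_comb:
  fixes t y :: real
  assumes "0 \<le> t" "t \<le> 1"
  shows "exp (t * y) \<le> 1 - t + t * exp y"
  using convex_onD[OF exp_convex, of t 0 y] assms by (simp add: algebra_simps)

lemma ln_mult_exp_div_le:
  fixes h q t J a :: real
  assumes h: "1 \<le> h" and q: "0 < q" and t: "0 < t" and J: "0 < J" and qt: "t * J \<le> 1 - q"
    and a: "0 \<le> a"
  shows "ln (h * exp (t * a)) / (- ln q) \<le> a / J + ln h / (t * J)"
proof -
  have tJ: "0 < t * J"
    using t J by simp
  then have "0 < - ln q"
    using q qt by simp
  moreover have "t * J \<le> - ln q"
    using ln_le_minus_one[OF q] qt by linarith
  moreover have "0 \<le> ln h + t * a"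
    using h t a by simp
  ultimately have "(ln h + t * a) / (- ln q) \<le> (ln h + t * a) / (t * J)"
    using t J by (intro divide_left_mono mult_pos_pos) auto
  also have "\<dots> = a / J + ln h / (t * J)"
    using t J by (simp add: field_simps)
  finally show ?thesis
    using h by (simp add: ln_mult)
qed

lemma ereal_le_divide_enn2ereal:
  fixes D :: ennreal and X :: ereal
  assumes D: "D \<le> ennreal Db" and Db: "0 < Db" and N: "0 \<le> N" "ereal N \<le> X"
  shows "ereal (N / Db) \<le> X / enn2ereal D"
proof -
  obtain d where d: "D = ennreal d" "0 \<le> d" "d \<le> Db"
    using D Db by (cases D) (auto simp: top_unique)
  show ?thesis
  proof (cases "d = 0")
    case True
    then show ?thesis
      using N d by (cases X) (auto simp: divide_ereal_def zero_ennreal.rep_eq)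
  next
    case False
    then have "ereal (N / Db) \<le> ereal (N / d)"
      using d N Db by (auto intro!: divide_left_mono)
    also have "ereal (N / d) \<le> X / ereal d"
      using False d N by (cases X) (auto simp: divide_ereal_def divide_inverse intro: mult_right_mono)
    finally show ?thesis
      using d by simp
  qed
qed

lemma Liminf_log_ratio_ge:
  fixes e :: "real \<Rightarrow> real" and D :: "real \<Rightarrow> ennreal"
  assumes A: "0 < A" and B: "0 < B" and K: "0 < K"
    and e: "\<And>a. 0 \<le> e a" "\<And>a. e a \<le> K * exp (- A * a)"
    and D: "\<And>a. 0 \<le> a \<Longrightarrow> D a \<le> ennreal (a / B + Kd)"
  shows "ereal (A * B) \<le> Liminf at_top (\<lambda>a. (if e a = 0 then \<infinity> else ereal (- ln (e a))) / enn2ereal (D a))"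
proof -
  define r where "r a = (A * a - ln K) / (a / B + Kd)" for a
  have "(r \<longlongrightarrow> A * B) at_top"
    unfolding r_def using B by real_asymp
  then have "Liminf at_top (\<lambda>a. ereal (r a)) = ereal (A * B)"
    by (intro lim_imp_Liminf tendsto_ereal) simp_all
  moreover have "eventually (\<lambda>a. ln K \<le> A * a) at_top" "eventually (\<lambda>a. 0 < a / B + Kd) at_top"
    using A B by real_asymp+
  then have "eventually (\<lambda>a. ereal (r a) \<le> (if e a = 0 then \<infinity> else ereal (- ln (e a))) / enn2ereal (D a)) at_top"
    using eventually_ge_at_top[of 0]
  proof eventually_elim
    case (elim a)
    have "ereal (A * a - ln K) \<le> (if e a = 0 then \<infinity> else ereal (- ln (e a)))"
    proof (cases "e a = 0")
      case False
      then have "ln (e a) \<le> ln (K * exp (- A * a))"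
        using e[of a] K by simp
      then show ?thesis
        using False K by (simp add: ln_mult)
    qed simp
    then show ?case
      unfolding r_def using elim by (intro ereal_le_divide_enn2ereal D) auto
  qed
  then have "Liminf at_top (\<lambda>a. ereal (r a))
      \<le> Liminf at_top (\<lambda>a. (if e a = 0 then \<infinity> else ereal (- ln (e a))) / enn2ereal (D a))"
    by (rule Liminf_mono)
  ultimately show ?thesis by simp
qed

section \<open>Log-likelihood-ratio random walks\<close>

(* Lambda is the log-likelihood ratio of the competing hypothesis against P, observed under P:
   exp Lambda is a probability density w.r.t. P.  Under state 0 the honest sums are such walks
   for (nu, L), under state 1 for (mu, -L). *)
locale llr_walk =
  fixes P :: "real measure" and \<Lambda> :: "real \<Rightarrow> real"
  assumes prob_space_P: "prob_space P" and sets_P: "sets P = sets borel"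
    and borel_measurable_\<Lambda>: "\<Lambda> \<in> borel_measurable borel"
    and integrable_\<Lambda>: "integrable P \<Lambda>" and drift_neg: "(\<integral>x. \<Lambda> x \<partial>P) < 0"
    and nn_integral_exp_\<Lambda>: "(\<integral>\<^sup>+x. ennreal (exp (\<Lambda> x)) \<partial>P) = 1"

sublocale llr_walk \<subseteq> prob_space P by (rule prob_space_P)

context llr_walk
begin

lemma measurable_\<Lambda>[measurable]: "\<Lambda> \<in> borel_measurable P"
  using borel_measurable_\<Lambda> by (simp add: measurable_cong_sets[OF sets_P refl])

lemma integrable_exp_\<Lambda>: "integrable P (\<lambda>x. exp (\<Lambda> x))"
  using nn_integral_exp_\<Lambda> by (intro integrableI_nonneg) (auto simp: AE_I2 less_top[symmetric])

lemma integral_exp_\<Lambda>: "(\<integral>x. exp (\<Lambda> x) \<partial>P) = 1"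
proof -
  have "ennreal (\<integral>x. exp (\<Lambda> x) \<partial>P) = 1"
    using nn_integral_exp_\<Lambda> by (subst nn_integral_eq_integral[symmetric]) (auto intro: integrable_exp_\<Lambda>)
  then show ?thesis by simp
qed

definition mgf :: "real \<Rightarrow> real" where
  "mgf t = (\<integral>x. exp (t * \<Lambda> x) \<partial>P)"

lemma integrable_exp_mult_\<Lambda>:
  assumes "0 \<le> t" "t \<le> 1"
  shows "integrable P (\<lambda>x. exp (t * \<Lambda> x))"
proof (rule Bochner_Integration.integrable_bound[OF _ _ AE_I2])
  show "integrable P (\<lambda>x. 1 - t + t * exp (\<Lambda> x))"
    using integrable_exp_\<Lambda> by auto
  show "norm (exp (t * \<Lambda> x)) \<le> norm (1 - t + t * exp (\<Lambda> x))" for x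
    using exp_mult_le_convex_comb[OF assms, of "\<Lambda> x"] assms by simp
qed auto

lemma mgf_pos: "0 \<le> t \<Longrightarrow> t \<le> 1 \<Longrightarrow> 0 < mgf t"
  using integral_less_AE_space[of "\<lambda>_. 0" "\<lambda>x. exp (t * \<Lambda> x)"] integrable_exp_mult_\<Lambda>
  unfolding mgf_def using emeasure_space_1 by auto

lemma nn_integral_exp_mult_\<Lambda>:
  assumes "0 \<le> t" "t \<le> 1"
  shows "(\<integral>\<^sup>+x. ennreal (exp (t * \<Lambda> x)) \<partial>P) = ennreal (mgf t)"
  unfolding mgf_def using integrable_exp_mult_\<Lambda>[OF assms]
  by (subst nn_integral_eq_integral) auto

lemma mgf_1: "mgf 1 = 1"
  using integral_exp_\<Lambda> by (simp add: mgf_def)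

lemma mgf_convex: "convex_on {0..1} mgf"
proof (rule convex_onI)
  fix u v w :: real assume "0 < w" "w < 1" and uv: "u \<in> {0..1}" "v \<in> {0..1}"
  then have w: "0 \<le> w" "w \<le> 1" by auto
  have uv': "0 \<le> (1 - w) * u + w * v" "(1 - w) * u + w * v \<le> 1"
    using mult_left_le[of u "1 - w"] mult_left_le[of v w] uv w by auto
  have "mgf ((1 - w) * u + w * v) \<le> (\<integral>x. (1 - w) * exp (u * \<Lambda> x) + w * exp (v * \<Lambda> x) \<partial>P)"
    unfolding mgf_def
  proof (intro integral_mono)
    show "exp (((1 - w) * u + w * v) * \<Lambda> x) \<le> (1 - w) * exp (u * \<Lambda> x) + w * exp (v * \<Lambda> x)" for x
      using convex_onD[OF exp_convex w, of "u * \<Lambda> x" "v * \<Lambda> x"] by (simp add: algebra_simps)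
  qed (use integrable_exp_mult_\<Lambda> uv uv' in auto)
  also have "\<dots> = (1 - w) * mgf u + w * mgf v"
    using integrable_exp_mult_\<Lambda> uv by (simp add: mgf_def)
  finally show "mgf ((1 - w) *\<^sub>R u + w *\<^sub>R v) \<le> (1 - w) * mgf u + w * mgf v"
    by simp
qed simp

lemma mgf_right_derivative_0: "((\<lambda>t. (mgf t - 1) / t) \<longlongrightarrow> (\<integral>x. \<Lambda> x \<partial>P)) (at_right 0)"
proof (rule tendsto_at_right_sequentially[of 0 1])
  fix S :: "nat \<Rightarrow> real" assume S0: "\<And>n. 0 < S n" and S1: "\<And>n. S n < 1" and "S \<longlonglongrightarrow> 0"
  then have S_at: "filterlim S (at 0) sequentially"
    by (intro filterlim_atI) (auto intro!: always_eventually simp: less_imp_neq[symmetric])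
  define q where "q n x = (exp (S n * \<Lambda> x) - 1) / S n" for n x
  have q_ge: "\<Lambda> x \<le> q n x" for n x
    using exp_ge_add_one_self[of "S n * \<Lambda> x"] S0[of n] by (simp add: q_def field_simps)
  have q_le: "q n x \<le> exp (\<Lambda> x) - 1" for n x
    using exp_mult_le_convex_comb[of "S n" "\<Lambda> x"] S0[of n] S1[of n] by (simp add: q_def field_simps)
  have "((\<lambda>h. (exp (h * y) - 1) / h) \<longlongrightarrow> y) (at 0)" for y :: real
  proof -
    have "((\<lambda>h. exp (h * y)) has_real_derivative (exp (0 * y) * y)) (at 0)"
      by (auto intro!: derivative_eq_intros)
    then show ?thesis by (simp add: DERIV_def)
  qed
  from filterlim_compose[OF this S_at]
  have "(\<lambda>n. q n x) \<longlonglongrightarrow> \<Lambda> x" for x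
    unfolding q_def by simp
  then have "(\<lambda>n. integral\<^sup>L P (q n)) \<longlonglongrightarrow> integral\<^sup>L P \<Lambda>"
  proof (intro integral_dominated_convergence[where w="\<lambda>x. \<bar>\<Lambda> x\<bar> + exp (\<Lambda> x) + 1"] AE_I2)
    show "q n \<in> borel_measurable P" for n
      unfolding q_def by measurable
    show "norm (q n x) \<le> \<bar>\<Lambda> x\<bar> + exp (\<Lambda> x) + 1" for n x
      using q_ge[of x n] q_le[of n x] exp_gt_zero[of "\<Lambda> x"] unfolding real_norm_def by linarith
  qed (use integrable_\<Lambda> integrable_exp_\<Lambda> in \<open>auto simp: q_def\<close>)
  moreover have "integral\<^sup>L P (q n) = (mgf (S n) - 1) / S n" for n
    unfolding q_def mgf_def using integrable_exp_mult_\<Lambda>[of "S n"] S0[of n] S1[of n]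
    by (simp add: prob_space)
  ultimately show "(\<lambda>n. (mgf (S n) - 1) / S n) \<longlonglongrightarrow> integral\<^sup>L P \<Lambda>" by simp
qed simp

lemma eventually_mgf_le:
  assumes "0 < e"
  shows "eventually (\<lambda>t. mgf t \<le> 1 - t * (- (\<integral>x. \<Lambda> x \<partial>P) - e)) (at_right 0)"
proof -
  have "eventually (\<lambda>t. (mgf t - 1) / t < (\<integral>x. \<Lambda> x \<partial>P) + e) (at_right 0)"
    using assms by (intro order_tendstoD(2)[OF mgf_right_derivative_0]) simp
  moreover have "eventually (\<lambda>t::real. 0 < t) (at_right 0)"
    by (simp add: eventually_at_right_less)
  ultimately show ?thesis
    by eventually_elim (simp add: field_simps)
qed

lemma mgf_less_1:
  assumes t: "0 < t" "t < 1"
  shows "mgf t < 1"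
proof -
  define I where "I = - (\<integral>x. \<Lambda> x \<partial>P)"
  have I: "0 < I" using drift_neg by (simp add: I_def)
  have "eventually (\<lambda>u. mgf u \<le> 1 - u * (I - I / 2)) (at_right 0)"
    using I unfolding I_def by (intro eventually_mgf_le) simp
  moreover have "eventually (\<lambda>u. 0 < u \<and> u < t) (at_right 0)"
    using t by (intro eventually_at_rightI[of 0 t]) auto
  ultimately have "eventually (\<lambda>u. mgf u \<le> 1 - u * (I - I / 2) \<and> 0 < u \<and> u < t) (at_right 0)"
    by eventually_elim simp
  then obtain u where u: "mgf u \<le> 1 - u * (I - I / 2)" "0 < u" "u < t"
    using eventually_happens'[OF trivial_limit_at_right_real] by blast
  then have "mgf u < 1"
    using mult_pos_pos[of u "I - I / 2"] I by linarith
  define w where "w = (t - u) / (1 - u)"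
  have w: "0 \<le> w" "w < 1" using u t by (auto simp: w_def field_simps)
  have "w * (1 - u) = t - u"
    using u t by (simp add: w_def)
  then have "t = (1 - w) *\<^sub>R u + w *\<^sub>R 1"
    by (simp add: algebra_simps)
  then have "mgf t \<le> (1 - w) * mgf u + w * mgf 1"
    using convex_onD[OF mgf_convex, of w u 1] u t w by simp
  also have "\<dots> < (1 - w) * 1 + w"
  proof -
    have "(1 - w) * mgf u < (1 - w) * 1"
      using \<open>mgf u < 1\<close> w by (intro mult_strict_left_mono) auto
    then show ?thesis by (simp add: mgf_1)
  qed
  finally show ?thesis by simp
qed

abbreviation paths :: "(nat \<Rightarrow> nat \<Rightarrow> real) measure" where
  "paths \<equiv> PiM UNIV (\<lambda>_::nat. PiM UNIV (\<lambda>_::nat. P))"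

lemma prob_space_paths: "prob_space paths"
  by (intro prob_space_PiM prob_space_P)

lemma measurable_path_component[measurable]: "(\<lambda>x. x k i) \<in> measurable paths P"
  by (rule measurable_PiM_component2)

lemma emeasure_sum_gt_le:
  assumes t: "0 \<le> t" "t \<le> 1"
  shows "emeasure paths {x\<in>space paths. -a < (\<Sum>j=1..n. \<Lambda> (x j i))} \<le> ennreal (exp (t * a) * mgf t ^ n)"
proof -
  let ?A = "{x\<in>space paths. -a < (\<Sum>j=1..n. \<Lambda> (x j i))}"
  have "?A \<in> sets paths" by measurable
  then have "emeasure paths ?A = (\<integral>\<^sup>+x. indicator ?A x \<partial>paths)"
    by simp
  also have "\<dots> \<le> (\<integral>\<^sup>+x. (\<Prod>i'\<in>{i}. ennreal (exp (t * a)) * (\<Prod>j\<in>{1..n}. ennreal (exp (t * \<Lambda> (x j i'))))) \<partial>paths)"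
  proof (intro nn_integral_mono)
    fix x
    have "(\<Prod>i'\<in>{i}. ennreal (exp (t * a)) * (\<Prod>j\<in>{1..n}. ennreal (exp (t * \<Lambda> (x j i')))))
        = ennreal (exp (t * (a + (\<Sum>j=1..n. \<Lambda> (x j i)))))"
      by (simp add: prod_ennreal exp_sum ennreal_mult' distrib_left sum_distrib_left exp_add)
    moreover have "x \<in> ?A \<Longrightarrow> 1 \<le> exp (t * (a + (\<Sum>j=1..n. \<Lambda> (x j i))))"
      using t by auto
    ultimately show "indicator ?A x \<le> (\<Prod>i'\<in>{i}. ennreal (exp (t * a)) * (\<Prod>j\<in>{1..n}. ennreal (exp (t * \<Lambda> (x j i')))))"
      by (auto simp: indicator_def)
  qed
  also have "\<dots> = (\<Prod>i'\<in>{i}. ennreal (exp (t * a)) * (\<integral>\<^sup>+v. ennreal (exp (t * \<Lambda> v)) \<partial>P) ^ card {1..n})"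
    by (rule nn_integral_iid_array_prod_blocks) (use prob_space_P in auto)
  also have "\<dots> = ennreal (exp (t * a) * mgf t ^ n)"
    using nn_integral_exp_mult_\<Lambda>[OF t] mgf_pos[OF t] by (simp add: ennreal_mult' ennreal_power)
  finally show ?thesis .
qed

lemma ennreal_exp_mult_prod:
  fixes x :: "nat \<Rightarrow> nat \<Rightarrow> real"
  shows
  "ennreal (exp (- t * a)) * (\<Prod>j\<in>{1..k}. ennreal (exp (t * \<Lambda> (x j i))))
     = ennreal (exp (t * ((\<Sum>j=1..k. \<Lambda> (x j i)) - a)))"
proof -
  have "(\<Prod>j\<in>{1..k}. exp (t * \<Lambda> (x j i))) = exp (t * (\<Sum>j=1..k. \<Lambda> (x j i)))"
    by (simp add: exp_sum sum_distrib_left)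
  then have "(\<Prod>j\<in>{1..k}. ennreal (exp (t * \<Lambda> (x j i)))) = ennreal (exp (t * (\<Sum>j=1..k. \<Lambda> (x j i))))"
    by (subst prod_ennreal) auto
  then show ?thesis
    by (simp add: ennreal_mult'[symmetric] exp_add[symmetric] algebra_simps)
qed

lemma emeasure_all_cross_within_le:
  assumes t: "0 \<le> t" "t \<le> 1" and J: "finite J"
  shows "emeasure paths {x\<in>space paths. \<forall>i\<in>J. \<exists>k\<in>{1..n}. a \<le> (\<Sum>j=1..k. \<Lambda> (x j i))}
           \<le> ennreal ((exp (- t * a) * (\<Sum>k\<in>{1..n}. mgf t ^ k)) ^ card J)"
proof -
  define c where "c = ennreal (exp (- t * a))"
  define g where "g v = ennreal (exp (t * \<Lambda> v))" for v
  define E where "E = {x\<in>space paths. \<forall>i\<in>J. \<exists>k\<in>{1..n}. a \<le> (\<Sum>j=1..k. \<Lambda> (x j i))}"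
  have g: "g \<in> borel_measurable P" "(\<integral>\<^sup>+v. g v \<partial>P) = ennreal (mgf t)"
    unfolding g_def using nn_integral_exp_mult_\<Lambda>[OF t] by auto
  have "E \<in> sets paths" unfolding E_def using J by measurable
  then have "emeasure paths E = (\<integral>\<^sup>+x. indicator E x \<partial>paths)"
    by simp
  also have "\<dots> \<le> (\<integral>\<^sup>+x. (\<Prod>i\<in>J. \<Sum>k\<in>{1..n}. c * (\<Prod>j\<in>{1..k}. g (x j i))) \<partial>paths)"
  proof (intro nn_integral_mono)
    fix x
    have "1 \<le> (\<Prod>i\<in>J. \<Sum>k\<in>{1..n}. c * (\<Prod>j\<in>{1..k}. g (x j i)))" if xE: "x \<in> E"
    proof (rule prod_ge_1)
      fix i assume "i \<in> J"
      then obtain k where k: "k \<in> {1..n}" "a \<le> (\<Sum>j=1..k. \<Lambda> (x j i))"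
        using xE unfolding E_def by blast
      have "1 \<le> c * (\<Prod>j\<in>{1..k}. g (x j i))"
        using k t unfolding c_def g_def ennreal_exp_mult_prod by simp
      also have "\<dots> \<le> (\<Sum>k\<in>{1..n}. c * (\<Prod>j\<in>{1..k}. g (x j i)))"
        using k by (intro member_le_sum) auto
      finally show "1 \<le> (\<Sum>k\<in>{1..n}. c * (\<Prod>j\<in>{1..k}. g (x j i)))" .
    qed
    then show "indicator E x \<le> (\<Prod>i\<in>J. \<Sum>k\<in>{1..n}. c * (\<Prod>j\<in>{1..k}. g (x j i)))"
      by (auto simp: indicator_def)
  qed
  also have "\<dots> = (\<integral>\<^sup>+x. (\<Sum>\<kappa>\<in>PiE J (\<lambda>_. {1..n}). \<Prod>i\<in>J. c * (\<Prod>j\<in>{1..\<kappa> i}. g (x j i))) \<partial>paths)"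
    using J by (subst prod_sum_PiE) auto
  also have "\<dots> = (\<Sum>\<kappa>\<in>PiE J (\<lambda>_. {1..n}). \<integral>\<^sup>+x. (\<Prod>i\<in>J. c * (\<Prod>j\<in>{1..\<kappa> i}. g (x j i))) \<partial>paths)"
    by (rule nn_integral_sum) (unfold g_def, measurable)
  also have "\<dots> = (\<Sum>\<kappa>\<in>PiE J (\<lambda>_. {1..n}). \<Prod>i\<in>J. c * ennreal (mgf t) ^ \<kappa> i)"
    by (intro sum.cong refl, subst nn_integral_iid_array_prod_blocks)
       (use J prob_space_P g in auto)
  also have "\<dots> = (\<Prod>i\<in>J. \<Sum>k\<in>{1..n}. c * ennreal (mgf t) ^ k)"
    using J by (subst prod_sum_PiE) auto
  also have "\<dots> = ennreal ((\<Sum>k\<in>{1..n}. exp (- t * a) * mgf t ^ k) ^ card J)"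
  proof -
    have "c * ennreal (mgf t) ^ k = ennreal (exp (- t * a) * mgf t ^ k)" for k
      using mgf_pos[OF t] by (simp add: c_def ennreal_power ennreal_mult')
    then show ?thesis
      using mgf_pos[OF t] by (simp add: ennreal_power sum_nonneg)
  qed
  also have "\<dots> = ennreal ((exp (- t * a) * (\<Sum>k\<in>{1..n}. mgf t ^ k)) ^ card J)"
    by (simp add: sum_distrib_left)
  finally show ?thesis unfolding E_def .
qed

lemma emeasure_all_cross_le:
  assumes t: "0 \<le> t" "t \<le> 1" and q: "mgf t < 1" and J: "finite J"
  shows "emeasure paths {x\<in>space paths. \<forall>i\<in>J. \<exists>k\<ge>1. a \<le> (\<Sum>j=1..k. \<Lambda> (x j i))}
           \<le> ennreal ((exp (- t * a) / (1 - mgf t)) ^ card J)"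
proof -
  define E where "E n = {x\<in>space paths. \<forall>i\<in>J. \<exists>k\<in>{1..n}. a \<le> (\<Sum>j=1..k. \<Lambda> (x j i))}" for n
  have E_sets: "E n \<in> sets paths" for n unfolding E_def using J by measurable
  have "{x\<in>space paths. \<forall>i\<in>J. \<exists>k\<ge>1. a \<le> (\<Sum>j=1..k. \<Lambda> (x j i))} = (\<Union>n. E n)"
  proof (intro set_eqI iffI)
    fix x assume x: "x \<in> {x\<in>space paths. \<forall>i\<in>J. \<exists>k\<ge>1. a \<le> (\<Sum>j=1..k. \<Lambda> (x j i))}"
    then have "\<forall>i\<in>J. \<exists>k. k \<ge> 1 \<and> a \<le> (\<Sum>j=1..k. \<Lambda> (x j i))" by blast
    then obtain f where f: "\<And>i. i \<in> J \<Longrightarrow> f i \<ge> 1 \<and> a \<le> (\<Sum>j=1..f i. \<Lambda> (x j i))"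
      by metis
    have "f i \<le> (\<Sum>i\<in>J. f i)" if "i \<in> J" for i
      using J that by (intro member_le_sum) auto
    then have "x \<in> E (\<Sum>i\<in>J. f i)" using x f unfolding E_def by force
    then show "x \<in> (\<Union>n. E n)" by blast
  qed (fastforce simp: E_def)
  also have "emeasure paths (\<Union>n. E n) = (SUP n. emeasure paths (E n))"
    using E_sets by (intro SUP_emeasure_incseq[symmetric]) (auto simp: incseq_def E_def, force)
  also have "\<dots> \<le> ennreal ((exp (- t * a) / (1 - mgf t)) ^ card J)"
  proof (rule SUP_least)
    fix n
    have "(\<Sum>k\<in>{1..n}. mgf t ^ k) \<le> (\<Sum>k. mgf t ^ k)"
      using mgf_pos[OF t] q by (intro sum_le_suminf summable_geometric) auto
    also have "\<dots> = 1 / (1 - mgf t)"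
      using suminf_geometric[of "mgf t"] mgf_pos[OF t] q by simp
    finally have "exp (- t * a) * (\<Sum>k\<in>{1..n}. mgf t ^ k) \<le> exp (- t * a) / (1 - mgf t)"
      by (simp add: divide_inverse mult_left_mono)
    moreover have "0 \<le> exp (- t * a) * (\<Sum>k\<in>{1..n}. mgf t ^ k)"
      using mgf_pos[OF t] by (intro mult_nonneg_nonneg sum_nonneg) auto
    ultimately have "(exp (- t * a) * (\<Sum>k\<in>{1..n}. mgf t ^ k)) ^ card J
        \<le> (exp (- t * a) / (1 - mgf t)) ^ card J"
      by (rule power_mono)
    then show "emeasure paths (E n) \<le> ennreal ((exp (- t * a) / (1 - mgf t)) ^ card J)"
      using emeasure_all_cross_within_le[OF t J, where a=a and n=n] unfolding E_def
      by (meson ennreal_leI order_trans)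
  qed
  finally show ?thesis unfolding E_def .
qed

lemma emeasure_some_sum_gt_le:
  assumes t: "0 \<le> t" "t \<le> 1" and H: "finite H"
  shows "emeasure paths {x\<in>space paths. \<exists>i\<in>H. -a < (\<Sum>j=1..n. \<Lambda> (x j i))}
           \<le> ennreal (real (card H) * exp (t * a) * mgf t ^ n)"
proof -
  have "{x\<in>space paths. \<exists>i\<in>H. -a < (\<Sum>j=1..n. \<Lambda> (x j i))}
      = (\<Union>i\<in>H. {x\<in>space paths. -a < (\<Sum>j=1..n. \<Lambda> (x j i))})"
    by auto
  also have "emeasure paths \<dots> \<le> (\<Sum>i\<in>H. emeasure paths {x\<in>space paths. -a < (\<Sum>j=1..n. \<Lambda> (x j i))})"
    by (rule emeasure_subadditive_finite) (use H in auto)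
  also have "\<dots> \<le> (\<Sum>i\<in>H. ennreal (exp (t * a) * mgf t ^ n))"
    by (intro sum_mono emeasure_sum_gt_le t)
  also have "\<dots> = ennreal (real (card H) * exp (t * a) * mgf t ^ n)"
    using mgf_pos[OF t] by (simp add: ennreal_of_nat_eq_real_of_nat ennreal_mult[symmetric] mult.assoc)
  finally show ?thesis .
qed

lemma expected_time_le:
  assumes t: "0 < t" "t \<le> 1" and q: "mgf t < 1" and H: "finite H" "H \<noteq> {}" and a: "0 \<le> a"
    and R: "prob_space R"
    and T: "AE z in paths \<Otimes>\<^sub>M R. \<forall>n\<ge>1. enat n < T z \<longrightarrow> (\<exists>i\<in>H. -a < (\<Sum>j=1..n. \<Lambda> (fst z j i)))"
  shows "(\<integral>\<^sup>+z. ennreal_of_enat (T z) \<partial>(paths \<Otimes>\<^sub>M R))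
           \<le> ennreal (ln (real (card H) * exp (t * a)) / (- ln (mgf t)) + 1 + 1 / (1 - mgf t))"
proof -
  interpret paths: prob_space paths by (rule prob_space_paths)
  define B where "B n = {x\<in>space paths. \<exists>i\<in>H. -a < (\<Sum>j=1..n. \<Lambda> (x j i))}" for n
  define F where "F n x = (if n = 0 then 1 else indicator (B n) x :: ennreal)" for n x
  have F: "F n \<in> borel_measurable paths" for n
    unfolding F_def B_def using H by measurable
  have "(\<integral>\<^sup>+z. ennreal_of_enat (T z) \<partial>(paths \<Otimes>\<^sub>M R)) \<le> (\<integral>\<^sup>+z. (\<Sum>n. F n (fst z)) \<partial>(paths \<Otimes>\<^sub>M R))"
  proof (rule nn_integral_mono_AE)
    show "AE z in paths \<Otimes>\<^sub>M R. ennreal_of_enat (T z) \<le> (\<Sum>n. F n (fst z))"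
      using AE_space T
    proof (eventually_elim, intro ennreal_of_enat_le_suminf)
      case (elim z)
      then show "1 \<le> F n (fst z)" if "enat n < T z" for n
        using that by (cases "n = 0") (auto simp: F_def B_def space_pair_measure)
    qed
  qed
  also have "\<dots> = (\<Sum>n. \<integral>\<^sup>+z. F n (fst z) \<partial>(paths \<Otimes>\<^sub>M R))"
    by (rule nn_integral_suminf) (use F in auto)
  also have "\<dots> = (\<Sum>n. \<integral>\<^sup>+x. F n x \<partial>paths)"
    by (intro suminf_cong nn_integral_pair_fst R F)
  also have "\<dots> \<le> ennreal (ln (real (card H) * exp (t * a)) / (- ln (mgf t)) + 1 + 1 / (1 - mgf t))"
  proof (rule suminf_le_geometric_tail)
    have "1 \<le> real (card H)" "1 \<le> exp (t * a)"
      using H t a by (auto simp: Suc_le_eq card_gt_0_iff)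
    then show A: "1 \<le> real (card H) * exp (t * a)"
      using mult_mono[of 1 "real (card H)" 1 "exp (t * a)"] by simp
    show "0 < mgf t" "mgf t < 1"
      using mgf_pos t q by auto
    show "(\<integral>\<^sup>+x. F n x \<partial>paths) \<le> 1" for n
    proof -
      have "(\<integral>\<^sup>+x. F n x \<partial>paths) \<le> (\<integral>\<^sup>+x. 1 \<partial>paths)"
        by (intro nn_integral_mono) (auto simp: F_def indicator_def)
      then show ?thesis by (simp add: paths.emeasure_space_1)
    qed
    show "(\<integral>\<^sup>+x. F n x \<partial>paths) \<le> ennreal (real (card H) * exp (t * a) * mgf t ^ n)" for n
    proof (cases "n = 0")
      case True
      then show ?thesis using A by (simp add: F_def paths.emeasure_space_1)
    next
      case False
      then have "(\<integral>\<^sup>+x. F n x \<partial>paths) = emeasure paths (B n)"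
        unfolding F_def B_def using H by simp measurable
      then show ?thesis
        using emeasure_some_sum_gt_le[OF less_imp_le[OF t(1)] t(2) H(1)] by (simp add: B_def)
    qed
  qed
  finally show ?thesis .
qed

lemma dec_prob_le_crossings:
  assumes t: "0 \<le> t" "t \<le> 1" and q: "mgf t < 1" and H: "finite H" and R: "prob_space R"
    and W: "AE z in paths \<Otimes>\<^sub>M R. tw z \<noteq> \<infinity> \<longrightarrow>
              (\<exists>J\<subseteq>H. card J = m \<and> (\<forall>i\<in>J. \<exists>k\<ge>1. a \<le> (\<Sum>j=1..k. \<Lambda> (fst z j i))))"
  shows "dec_prob (paths \<Otimes>\<^sub>M R) tw tr \<le> real (card H choose m) * (exp (- t * a) / (1 - mgf t)) ^ m"
proof -
  interpret paths: prob_space paths by (rule prob_space_paths)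
  interpret pair: prob_space "paths \<Otimes>\<^sub>M R"
    by (rule prob_space_pair[OF prob_space_paths R])
  define Js where "Js = {J. J \<subseteq> H \<and> card J = m}"
  have Js: "finite Js" "card Js = card H choose m"
    using H unfolding Js_def by (auto intro: n_subsets)
  define A where "A J = {x\<in>space paths. \<forall>i\<in>J. \<exists>k\<ge>1. a \<le> (\<Sum>j=1..k. \<Lambda> (x j i))}" for J
  define E where "E J = {z\<in>space (paths \<Otimes>\<^sub>M R). fst z \<in> A J}" for J
  have A_sets: "A J \<in> sets paths" if "J \<in> Js" for J
    using that H unfolding A_def Js_def by (measurable, auto intro: finite_subset)
  have E_sets: "E J \<in> sets (paths \<Otimes>\<^sub>M R)" if "J \<in> Js" for J
    using A_sets[OF that] unfolding E_def by measurable
  have E_le: "measure (paths \<Otimes>\<^sub>M R) (E J) \<le> (exp (- t * a) / (1 - mgf t)) ^ m" if J: "J \<in> Js" for J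
  proof -
    have "finite J" "card J = m"
      using J H unfolding Js_def by (auto intro: finite_subset)
    have "emeasure (paths \<Otimes>\<^sub>M R) (E J) = emeasure paths (A J)"
      unfolding E_def by (rule emeasure_pair_fst[OF R A_sets[OF J]])
    also have "\<dots> \<le> ennreal ((exp (- t * a) / (1 - mgf t)) ^ m)"
      unfolding A_def \<open>card J = m\<close>[symmetric] by (rule emeasure_all_cross_le[OF t q \<open>finite J\<close>])
    finally show ?thesis
      using q by (simp add: pair.emeasure_eq_measure)
  qed
  have "measure (paths \<Otimes>\<^sub>M R) (\<Union>J\<in>Js. E J) \<le> (\<Sum>J\<in>Js. measure (paths \<Otimes>\<^sub>M R) (E J))"
    using E_sets Js by (intro pair.finite_measure_subadditive_finite) auto
  also have "\<dots> \<le> (\<Sum>J\<in>Js. (exp (- t * a) / (1 - mgf t)) ^ m)"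
    by (intro sum_mono E_le)
  finally have "measure (paths \<Otimes>\<^sub>M R) (\<Union>J\<in>Js. E J) \<le> real (card H choose m) * (exp (- t * a) / (1 - mgf t)) ^ m"
    using Js by simp
  moreover have "dec_prob (paths \<Otimes>\<^sub>M R) tw tr \<le> measure (paths \<Otimes>\<^sub>M R) (\<Union>J\<in>Js. E J)"
  proof (rule dec_prob_le_measure)
    show "AE z in paths \<Otimes>\<^sub>M R. tw z \<noteq> \<infinity> \<longrightarrow> z \<in> (\<Union>J\<in>Js. E J)"
      using AE_space W by eventually_elim (auto simp: E_def A_def Js_def space_pair_measure)
  qed (use E_sets Js in \<open>auto intro: pair.prob_space_axioms\<close>)
  ultimately show ?thesis by linarith
qed

end

section \<open>Order statistics and honest sensors\<close>

lemma length_filter_mono: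
  "(\<And>x. P x \<Longrightarrow> Q x) \<Longrightarrow> length (filter P xs) \<le> length (filter Q xs)"
  by (induct xs) auto

lemma sorted_length_filter_le_nth:
  fixes xs :: "'a::linorder list"
  assumes "sorted xs" "p < length xs"
  shows "p + 1 \<le> length (filter (\<lambda>x. x \<le> xs ! p) xs)"
proof -
  have "filter (\<lambda>x. x \<le> xs ! p) (take (p + 1) xs) = take (p + 1) xs"
    using assms by (auto intro!: filter_True simp: in_set_conv_nth sorted_nth_mono)
  then have "length (filter (\<lambda>x. x \<le> xs ! p) (take (p + 1) xs)) = p + 1"
    using assms by simp
  moreover have "length (filter (\<lambda>x. x \<le> xs ! p) xs) = length (filter (\<lambda>x. x \<le> xs ! p) (take (p + 1) xs))
      + length (filter (\<lambda>x. x \<le> xs ! p) (drop (p + 1) xs))"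
    by (subst append_take_drop_id[symmetric, of xs "p + 1"], subst filter_append) simp
  ultimately show ?thesis by linarith
qed

lemma sorted_length_filter_le_less_nth:
  fixes xs :: "'a::linorder list"
  assumes "sorted xs" "p < length xs" "v < xs ! p"
  shows "length (filter (\<lambda>x. x \<le> v) xs) \<le> p"
proof -
  have "filter (\<lambda>x. x \<le> v) (drop p xs) = []"
  proof (rule filter_False, intro ballI)
    fix x assume "x \<in> set (drop p xs)"
    then obtain k where "x = xs ! (p + k)" "p + k < length xs"
      by (auto simp: in_set_conv_nth)
    then have "xs ! p \<le> x" using assms sorted_nth_mono[of xs p "p + k"] by auto
    then show "\<not> x \<le> v" using assms by auto
  qed
  moreover have "length (filter (\<lambda>x. x \<le> v) xs) = length (filter (\<lambda>x. x \<le> v) (take p xs))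
      + length (filter (\<lambda>x. x \<le> v) (drop p xs))"
    by (subst append_take_drop_id[symmetric, of xs p], subst filter_append) simp
  moreover have "length (filter (\<lambda>x. x \<le> v) (take p xs)) \<le> p"
    using length_filter_le[of _ "take p xs"] by (metis length_take min.bounded_iff)
  ultimately show ?thesis by simp
qed

lemma length_filter_sort_map_upt:
  "length (filter P (sort (map t [1..<s+1]))) = card {i\<in>{1..s}. P (t i)}"
proof -
  have "length (filter P (sort (map t [1..<s+1]))) = length (filter (P \<circ> t) [1..<s+1])"
    by (simp add: filter_sort)
  also have "\<dots> = card ({x. (P \<circ> t) x} \<inter> set [1..<s+1])"
    by (rule distinct_length_filter) simp
  also have "{x. (P \<circ> t) x} \<inter> set [1..<s+1] = {i\<in>{1..s}. P (t i)}" by auto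
  finally show ?thesis .
qed

lemma order_stat_finite_imp_card:
  fixes t :: "nat \<Rightarrow> enat"
  assumes r: "1 \<le> r" "r \<le> s" and fin: "order_stat s r t \<noteq> \<infinity>"
  shows "r \<le> card {i\<in>{1..s}. t i \<noteq> \<infinity>}"
proof -
  define xs where "xs = sort (map t [1..<s+1])"
  have xs: "sorted xs" "r - 1 < length xs" using r unfolding xs_def by auto
  have "r \<le> length (filter (\<lambda>x. x \<le> xs ! (r - 1)) xs)"
    using sorted_length_filter_le_nth[OF xs] r by simp
  also have "\<dots> \<le> length (filter (\<lambda>x. x \<noteq> \<infinity>) xs)"
  proof (rule length_filter_mono)
    fix x assume "x \<le> xs ! (r - 1)"
    then show "x \<noteq> \<infinity>" using fin unfolding order_stat_def xs_def[symmetric]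
      by (metis enat_ord_simps(5))
  qed
  also have "\<dots> = card {i\<in>{1..s}. t i \<noteq> \<infinity>}"
    unfolding xs_def by (rule length_filter_sort_map_upt)
  finally show ?thesis .
qed

lemma order_stat_le:
  fixes t :: "nat \<Rightarrow> enat"
  assumes r: "1 \<le> r" "r \<le> s" and card: "r \<le> card {i\<in>{1..s}. t i \<le> v}"
  shows "order_stat s r t \<le> v"
proof (rule ccontr)
  define xs where "xs = sort (map t [1..<s+1])"
  have xs: "sorted xs" "r - 1 < length xs" using r unfolding xs_def by auto
  assume "\<not> order_stat s r t \<le> v"
  then have "v < xs ! (r - 1)" unfolding order_stat_def xs_def by simp
  from sorted_length_filter_le_less_nth[OF xs this]
  have "length (filter (\<lambda>x. x \<le> v) xs) \<le> r - 1" .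
  moreover have "length (filter (\<lambda>x. x \<le> v) xs) = card {i\<in>{1..s}. t i \<le> v}"
    unfolding xs_def by (rule length_filter_sort_map_upt)
  ultimately show False using card r by simp
qed

lemma obtain_honest_finite:
  fixes t :: "nat \<Rightarrow> enat"
  assumes C: "C \<subseteq> {1..s}" "card C = c" "2 * c < s"
    and fin: "order_stat s (s - c) t \<noteq> \<infinity>"
  obtains J where "J \<subseteq> {1..s} - C" "card J = s - 2 * c" "\<And>i. i \<in> J \<Longrightarrow> t i \<noteq> \<infinity>"
proof -
  define S where "S = {i\<in>{1..s}. t i \<noteq> \<infinity>}"
  have "s - c \<le> card S" unfolding S_def using C by (intro order_stat_finite_imp_card fin) auto
  moreover have "card S - card C \<le> card (S - C)"
    using C by (intro diff_card_le_card_Diff) (auto intro: finite_subset)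
  ultimately have "s - 2 * c \<le> card (S - C)" using C by linarith
  then obtain J where "J \<subseteq> S - C" "card J = s - 2 * c"
    by (meson obtain_subset_with_card_n)
  then show ?thesis by (intro that[of J]) (auto simp: S_def)
qed

lemma card_honest:
  "C \<subseteq> {1..s} \<Longrightarrow> card C = c \<Longrightarrow> card ({1..s} - C) = s - c"
  by (simp add: card_Diff_subset finite_subset)

lemma honest_exceeds_order_stat:
  fixes t :: "nat \<Rightarrow> enat"
  assumes C: "C \<subseteq> {1..s}" "card C = c" "2 * c < s"
    and lt: "enat n < order_stat s (s - c) t"
  shows "\<exists>i\<in>{1..s} - C. enat n < t i"
proof -
  define H where "H = {1..s} - C"
  have H: "finite H" "card H = s - c"
    using card_honest[OF C(1,2)] unfolding H_def by auto
  then have "H \<noteq> {}"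
    using C(3) by (intro notI) simp
  have "order_stat s (s - c) t \<le> Max (t ` H)"
  proof (rule order_stat_le)
    have "H \<subseteq> {i\<in>{1..s}. t i \<le> Max (t ` H)}" using H unfolding H_def by auto
    then have "card H \<le> card {i\<in>{1..s}. t i \<le> Max (t ` H)}"
      by (intro card_mono) auto
    then show "s - c \<le> card {i\<in>{1..s}. t i \<le> Max (t ` H)}"
      using H by simp
  qed (use C in auto)
  with lt have "enat n < Max (t ` H)" by simp
  then show ?thesis
    using H \<open>H \<noteq> {}\<close> Max_gr_iff[of "t ` H" "enat n"] unfolding H_def by auto
qed

lemma received_honest:
  assumes "attack_support g \<theta> C x \<omega> = C" "i \<notin> C" "1 \<le> k"
  shows "received g \<theta> C x \<omega> k i = x k i"
  using assms unfolding received_def attack_support_def by auto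

lemma llr_sum_received_honest:
  assumes "attack_support g \<theta> C x \<omega> = C" "i \<notin> C"
  shows "llr_sum L (received g \<theta> C x \<omega>) i n = (\<Sum>j=1..n. L (x j i))"
  unfolding llr_sum_def using received_honest[OF assms] by (intro sum.cong) auto

lemma tau_down_gt:
  assumes "enat n < tau_down L y a i" "1 \<le> n"
  shows "- a < llr_sum L y i n"
proof (rule ccontr)
  assume "\<not> - a < llr_sum L y i n"
  then have "llr_sum L y i n \<le> - a" by simp
  then have "tau_down L y a i \<le> enat n"
    unfolding tau_down_def using assms(2) by (auto intro: Least_le)
  then show False using assms(1) by simp
qed

section \<open>Symmetry between the two states\<close>

lemma tau_down_eq_tau_up_uminus: "tau_down L y a i = tau_up (\<lambda>x. - L x) y a i"
  by (simp add: tau_down_def tau_up_def llr_sum_def sum_negf le_minus_iff)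

lemma tau_up_eq_tau_down_uminus: "tau_up L y b i = tau_down (\<lambda>x. - L x) y b i"
  by (simp add: tau_down_def tau_up_def llr_sum_def sum_negf)

lemma inj_prefix_cong: "g \<theta> = g' \<theta>' \<Longrightarrow> inj_prefix g \<theta> C x \<omega> k = inj_prefix g' \<theta>' C x \<omega> k"
  by (induction k) (simp_all add: Let_def)

lemma inj_prefix_swap: "inj_prefix g 1 C x \<omega> = inj_prefix (\<lambda>\<theta>. g (1 - \<theta>)) 0 C x \<omega>"
  by (intro ext inj_prefix_cong) simp

lemma received_swap: "received g 1 C x \<omega> = received (\<lambda>\<theta>. g (1 - \<theta>)) 0 C x \<omega>"
  unfolding received_def attack_vec_def inj_prefix_swap ..

lemma attack_support_swap: "attack_support g 1 C x \<omega> = attack_support (\<lambda>\<theta>. g (1 - \<theta>)) 0 C x \<omega>"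
  unfolding attack_support_def attack_vec_def inj_prefix_swap ..

lemma sample_space_swap: "sample_space \<mu> \<nu> R 1 = sample_space \<nu> \<mu> R 0"
  by (simp add: sample_space_def obs_law_def)

(* State 1 is state 0 with mu and nu exchanged, L negated, the attack reindexed and the two
   thresholds exchanged. *)
lemma beta_err_swap:
  "beta_err \<mu> \<nu> R g C L s r a b = alpha_err \<nu> \<mu> R (\<lambda>\<theta>. g (1 - \<theta>)) C (\<lambda>x. - L x) s r b a"
  unfolding beta_err_def alpha_err_def vote_up_def vote_down_def sample_space_swap received_swap
    tau_down_eq_tau_up_uminus[of L] tau_up_eq_tau_down_uminus[of L] ..

lemma exp_T_swap:
  "exp_T \<mu> \<nu> R g C L s r a b 1 = exp_T \<nu> \<mu> R (\<lambda>\<theta>. g (1 - \<theta>)) C (\<lambda>x. - L x) s r b a 0"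
  unfolding exp_T_def vote_T_def vote_up_def vote_down_def sample_space_swap received_swap
    tau_down_eq_tau_up_uminus[of L] tau_up_eq_tau_down_uminus[of L]
  by (subst min.commute) (rule refl)

section \<open>Error probability and delay of the voting rule\<close>

lemma alpha_err_le:
  fixes \<mu> \<nu> :: "real measure" and L :: "real \<Rightarrow> real" and R :: "'r measure"
  assumes W: "llr_walk \<nu> L" and C: "C \<subseteq> {1..s}" "card C = c" "2 * c < s" and R: "prob_space R"
    and sup: "AE z in sample_space \<mu> \<nu> R 0. attack_support g 0 C (fst z) (snd z) = C"
    and t: "0 \<le> t" "t \<le> 1" "llr_walk.mgf \<nu> L t < 1"
  shows "alpha_err \<mu> \<nu> R g C L s (s - c) a b
           \<le> real ((s - c) choose (s - 2 * c)) * (exp (- t * b) / (1 - llr_walk.mgf \<nu> L t)) ^ (s - 2 * c)"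
proof -
  interpret llr_walk \<nu> L by (rule W)
  have "sample_space \<mu> \<nu> R 0 = paths \<Otimes>\<^sub>M R"
    by (simp add: sample_space_def obs_law_def)
  then have "alpha_err \<mu> \<nu> R g C L s (s - c) a b
      = dec_prob (paths \<Otimes>\<^sub>M R) (\<lambda>z. vote_up L s (s - c) b (received g 0 C (fst z) (snd z)))
          (\<lambda>z. vote_down L s (s - c) a (received g 0 C (fst z) (snd z)))"
    unfolding alpha_err_def by simp
  also have "\<dots> \<le> real (card ({1..s} - C) choose (s - 2 * c)) * (exp (- t * b) / (1 - mgf t)) ^ (s - 2 * c)"
  proof (rule dec_prob_le_crossings[OF t _ R])
    show "AE z in paths \<Otimes>\<^sub>M R. vote_up L s (s - c) b (received g 0 C (fst z) (snd z)) \<noteq> \<infinity> \<longrightarrow>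
            (\<exists>J\<subseteq>{1..s} - C. card J = s - 2 * c \<and> (\<forall>i\<in>J. \<exists>k\<ge>1. b \<le> (\<Sum>j=1..k. L (fst z j i))))"
      using sup unfolding \<open>sample_space \<mu> \<nu> R 0 = paths \<Otimes>\<^sub>M R\<close>
    proof eventually_elim
      case (elim z)
      show ?case
      proof
        assume "vote_up L s (s - c) b (received g 0 C (fst z) (snd z)) \<noteq> \<infinity>"
        then obtain J where J: "J \<subseteq> {1..s} - C" "card J = s - 2 * c"
          "\<And>i. i \<in> J \<Longrightarrow> tau_up L (received g 0 C (fst z) (snd z)) b i \<noteq> \<infinity>"
          unfolding vote_up_def by (rule obtain_honest_finite[OF C]) blast
        have "\<exists>k\<ge>1. b \<le> (\<Sum>j=1..k. L (fst z j i))" if i: "i \<in> J" for i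
        proof -
          obtain k where "k \<ge> 1" "b \<le> llr_sum L (received g 0 C (fst z) (snd z)) i k"
            using J(3)[OF i] unfolding tau_up_def by (auto split: if_splits)
          moreover have "i \<notin> C"
            using J(1) i by auto
          ultimately show ?thesis
            using llr_sum_received_honest[OF elim] by auto
        qed
        then show "\<exists>J\<subseteq>{1..s} - C. card J = s - 2 * c \<and> (\<forall>i\<in>J. \<exists>k\<ge>1. b \<le> (\<Sum>j=1..k. L (fst z j i)))"
          using J by blast
      qed
    qed
  qed simp
  finally show ?thesis using card_honest[OF C(1,2)] by simp
qed

lemma exp_T_0_le:
  fixes \<mu> \<nu> :: "real measure" and L :: "real \<Rightarrow> real" and R :: "'r measure"
  assumes W: "llr_walk \<nu> L" and C: "C \<subseteq> {1..s}" "card C = c" "2 * c < s" and R: "prob_space R"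
    and sup: "AE z in sample_space \<mu> \<nu> R 0. attack_support g 0 C (fst z) (snd z) = C"
    and t: "0 < t" "t \<le> 1" "llr_walk.mgf \<nu> L t < 1" and a: "0 \<le> a"
  shows "exp_T \<mu> \<nu> R g C L s (s - c) a b 0
           \<le> ennreal (ln (real (s - c) * exp (t * a)) / (- ln (llr_walk.mgf \<nu> L t)) + 1
                + 1 / (1 - llr_walk.mgf \<nu> L t))"
proof -
  interpret llr_walk \<nu> L by (rule W)
  have card_H: "card ({1..s} - C) = s - c"
    using card_honest[OF C(1,2)] .
  then have H: "{1..s} - C \<noteq> {}"
    using C(3) card_gt_0_iff[of "{1..s} - C"] by simp
  have "sample_space \<mu> \<nu> R 0 = paths \<Otimes>\<^sub>M R"
    by (simp add: sample_space_def obs_law_def)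
  then have "exp_T \<mu> \<nu> R g C L s (s - c) a b 0
      = (\<integral>\<^sup>+z. ennreal_of_enat (vote_T L s (s - c) a b (received g 0 C (fst z) (snd z))) \<partial>(paths \<Otimes>\<^sub>M R))"
    unfolding exp_T_def by simp
  also have "\<dots> \<le> ennreal (ln (real (card ({1..s} - C)) * exp (t * a)) / (- ln (mgf t)) + 1 + 1 / (1 - mgf t))"
  proof (rule expected_time_le[OF t _ H a R])
    show "AE z in paths \<Otimes>\<^sub>M R. \<forall>n\<ge>1. enat n < vote_T L s (s - c) a b (received g 0 C (fst z) (snd z))
            \<longrightarrow> (\<exists>i\<in>{1..s} - C. - a < (\<Sum>j=1..n. L (fst z j i)))"
      using sup unfolding \<open>sample_space \<mu> \<nu> R 0 = paths \<Otimes>\<^sub>M R\<close>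
    proof (eventually_elim, intro allI impI)
      case (elim z)
      fix n :: nat assume n: "1 \<le> n"
        and "enat n < vote_T L s (s - c) a b (received g 0 C (fst z) (snd z))"
      then have "enat n < order_stat s (s - c) (tau_down L (received g 0 C (fst z) (snd z)) a)"
        unfolding vote_T_def vote_down_def by simp
      from honest_exceeds_order_stat[OF C this] obtain i where i: "i \<in> {1..s} - C"
        "enat n < tau_down L (received g 0 C (fst z) (snd z)) a i" by blast
      then show "\<exists>i\<in>{1..s} - C. - a < (\<Sum>j=1..n. L (fst z j i))"
        using tau_down_gt[OF i(2) n] llr_sum_received_honest[OF elim, of i] by auto
    qed
  qed simp
  finally show ?thesis using card_H by simp
qed

lemma alpha_err_exponential:
  fixes \<mu> \<nu> :: "real measure" and L :: "real \<Rightarrow> real" and R :: "'r measure"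
  assumes W: "llr_walk \<nu> L" and C: "C \<subseteq> {1..s}" "card C = c" "2 * c < s" and R: "prob_space R"
    and sup: "AE z in sample_space \<mu> \<nu> R 0. attack_support g 0 C (fst z) (snd z) = C"
    and \<delta>: "0 < \<delta>" "\<delta> < 1"
  obtains K where "0 < K"
    "\<And>a b. alpha_err \<mu> \<nu> R g C L s (s - c) a b \<le> K * exp (- (real (s - 2 * c) * (1 - \<delta>)) * b)"
proof -
  interpret llr_walk \<nu> L by (rule W)
  define m where "m = s - 2 * c"
  define q where "q = mgf (1 - \<delta>)"
  have q: "0 < q" "q < 1"
    using mgf_pos mgf_less_1 \<delta> by (auto simp: q_def)
  define K where "K = real ((s - c) choose m) * (1 / (1 - q)) ^ m"
  have "0 < K"
    using q by (simp add: K_def m_def)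
  then show ?thesis
  proof (rule that)
    fix a b
    have "exp (- (1 - \<delta>) * b) ^ m = exp (real m * (- (1 - \<delta>) * b))"
      by (rule exp_of_nat_mult[symmetric])
    also have "real m * (- (1 - \<delta>) * b) = - (real m * (1 - \<delta>)) * b"
      by (simp add: algebra_simps)
    finally have pow: "(exp (- (1 - \<delta>) * b) / (1 - q)) ^ m = (1 / (1 - q)) ^ m * exp (- (real m * (1 - \<delta>)) * b)"
      by (simp add: power_divide)
    have "alpha_err \<mu> \<nu> R g C L s (s - c) a b \<le> real ((s - c) choose m) * (exp (- (1 - \<delta>) * b) / (1 - q)) ^ m"
      unfolding q_def m_def by (rule alpha_err_le[OF W C R sup]) (use q \<delta> in \<open>auto simp: q_def\<close>)
    also have "\<dots> = K * exp (- (real m * (1 - \<delta>)) * b)"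
      unfolding K_def pow by (simp only: mult.assoc)
    finally show "alpha_err \<mu> \<nu> R g C L s (s - c) a b \<le> K * exp (- (real (s - 2 * c) * (1 - \<delta>)) * b)"
      unfolding m_def .
  qed
qed

lemma exp_T_0_linear:
  fixes \<mu> \<nu> :: "real measure" and L :: "real \<Rightarrow> real" and R :: "'r measure"
  assumes W: "llr_walk \<nu> L" and C: "C \<subseteq> {1..s}" "card C = c" "2 * c < s" and R: "prob_space R"
    and sup: "AE z in sample_space \<mu> \<nu> R 0. attack_support g 0 C (fst z) (snd z) = C"
    and \<delta>: "0 < \<delta>" "\<delta> < - (\<integral>x. L x \<partial>\<nu>)"
  obtains K where
    "\<And>a b. 0 \<le> a \<Longrightarrow> exp_T \<mu> \<nu> R g C L s (s - c) a b 0 \<le> ennreal (a / (- (\<integral>x. L x \<partial>\<nu>) - \<delta>) + K)"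
proof -
  interpret llr_walk \<nu> L by (rule W)
  define J where "J = - (\<integral>x. L x \<partial>\<nu>) - \<delta>"
  have J: "0 < J" using \<delta> by (simp add: J_def)
  have "eventually (\<lambda>t. mgf t \<le> 1 - t * J) (at_right 0)"
    unfolding J_def by (rule eventually_mgf_le[OF \<delta>(1)])
  moreover have "eventually (\<lambda>t. 0 < t \<and> t < 1) (at_right (0::real))"
    by (intro eventually_at_rightI[of 0 1]) auto
  ultimately have "eventually (\<lambda>t. mgf t \<le> 1 - t * J \<and> 0 < t \<and> t < 1) (at_right 0)"
    by eventually_elim simp
  then obtain t where t: "mgf t \<le> 1 - t * J" "0 < t" "t < 1"
    using eventually_happens'[OF trivial_limit_at_right_real] by blast
  define q where "q = mgf t"
  have q: "0 < q" "q < 1"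
    using mgf_pos mgf_less_1 t by (auto simp: q_def)
  have h: "1 \<le> real (s - c)"
    using C by simp
  show ?thesis
  proof (rule that)
    fix a b :: real assume a: "0 \<le> a"
    have "exp_T \<mu> \<nu> R g C L s (s - c) a b 0 \<le> ennreal (ln (real (s - c) * exp (t * a)) / (- ln q) + 1 + 1 / (1 - q))"
      unfolding q_def using t q by (intro exp_T_0_le[OF W C R sup _ _ _ a]) (auto simp: q_def)
    also have "\<dots> \<le> ennreal (a / J + (ln (real (s - c)) / (t * J) + 1 + 1 / (1 - q)))"
      using ln_mult_exp_div_le[OF h q(1) t(2) J _ a] t(1) by (intro ennreal_leI) (simp add: q_def)
    finally show "exp_T \<mu> \<nu> R g C L s (s - c) a b 0 \<le> ennreal (a / (- (\<integral>x. L x \<partial>\<nu>) - \<delta>)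
        + (ln (real (s - c)) / (t * J) + 1 + 1 / (1 - q)))"
      unfolding J_def .
  qed
qed

lemma llr_walk_null:
  fixes \<mu> \<nu> :: "real measure" and L :: "real \<Rightarrow> real"
  assumes \<nu>: "prob_space \<nu>" "sets \<nu> = sets borel" and \<mu>: "prob_space \<mu>"
    and L: "L \<in> borel_measurable borel" and dens: "\<mu> = density \<nu> (\<lambda>x. ennreal (exp (L x)))"
    and int: "integrable \<nu> L" and drift: "(\<integral>x. L x \<partial>\<nu>) < 0"
  shows "llr_walk \<nu> L"
proof -
  have L_\<nu>: "L \<in> borel_measurable \<nu>"
    using L by (simp add: measurable_cong_sets[OF \<nu>(2) refl])
  have "(\<integral>\<^sup>+x. ennreal (exp (L x)) \<partial>\<nu>) = (\<integral>\<^sup>+x. ennreal (exp (L x)) * indicator (space \<nu>) x \<partial>\<nu>)"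
    by (intro nn_integral_cong) simp
  also have "\<dots> = emeasure (density \<nu> (\<lambda>x. ennreal (exp (L x)))) (space \<nu>)"
    using L_\<nu> by (intro emeasure_density[symmetric]) auto
  also have "\<dots> = 1"
    using prob_space.emeasure_space_1[OF \<mu>] unfolding dens by simp
  finally show ?thesis
    by (rule llr_walk.intro[OF \<nu> L int drift])
qed

lemma llr_walk_alternative:
  fixes \<mu> \<nu> :: "real measure" and L :: "real \<Rightarrow> real"
  assumes \<nu>: "prob_space \<nu>" "sets \<nu> = sets borel" and \<mu>: "prob_space \<mu>" "sets \<mu> = sets borel"
    and L: "L \<in> borel_measurable borel" and dens: "\<mu> = density \<nu> (\<lambda>x. ennreal (exp (L x)))"
    and int: "integrable \<mu> L" and drift: "0 < (\<integral>x. L x \<partial>\<mu>)"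
  shows "llr_walk \<mu> (\<lambda>x. - L x)"
proof -
  have L_\<nu>: "L \<in> borel_measurable \<nu>"
    using L by (simp add: measurable_cong_sets[OF \<nu>(2) refl])
  have "(\<integral>\<^sup>+x. ennreal (exp (- L x)) \<partial>\<mu>) = (\<integral>\<^sup>+x. ennreal (exp (L x)) * ennreal (exp (- L x)) \<partial>\<nu>)"
    unfolding dens using L_\<nu> by (intro nn_integral_density) auto
  also have "\<dots> = (\<integral>\<^sup>+x. 1 \<partial>\<nu>)"
    by (intro nn_integral_cong) (simp add: ennreal_mult'[symmetric] exp_minus)
  also have "\<dots> = 1"
    using prob_space.emeasure_space_1[OF \<nu>(1)] by simp
  finally show ?thesis
    using L int drift by (intro llr_walk.intro[OF \<mu>]) auto
qed

lemma perf_ratio_Liminf_ge: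
  fixes \<mu> \<nu> :: "real measure" and L :: "real \<Rightarrow> real" and R :: "'r measure"
  assumes W0: "llr_walk \<nu> L" and W1: "llr_walk \<mu> (\<lambda>x. - L x)"
    and C: "C \<subseteq> {1..s}" "card C = c" "2 * c < s" and R: "prob_space R"
    and sup: "\<forall>\<theta>\<in>{0,1}. AE z in sample_space \<mu> \<nu> R \<theta>. attack_support g \<theta> C (fst z) (snd z) = C"
    and \<delta>: "0 < \<delta>" "\<delta> < 1" "\<delta> < min (- (\<integral>x. L x \<partial>\<nu>)) (\<integral>x. L x \<partial>\<mu>)"
  shows "ereal (real (s - 2 * c) * (1 - \<delta>) * (min (- (\<integral>x. L x \<partial>\<nu>)) (\<integral>x. L x \<partial>\<mu>) - \<delta>))
           \<le> Liminf at_top (\<lambda>a. perf_ratio \<mu> \<nu> R g C L s (s - c) a a)"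
proof -
  define I where "I = min (- (\<integral>x. L x \<partial>\<nu>)) (\<integral>x. L x \<partial>\<mu>)"
  define A where "A = real (s - 2 * c) * (1 - \<delta>)"
  have sup0: "AE z in sample_space \<mu> \<nu> R 0. attack_support g 0 C (fst z) (snd z) = C"
    using sup by simp
  have sup1: "AE z in sample_space \<nu> \<mu> R 0. attack_support (\<lambda>\<theta>. g (1 - \<theta>)) 0 C (fst z) (snd z) = C"
    using bspec[OF sup, of 1] unfolding sample_space_swap attack_support_swap by simp
  obtain K0 where K0: "0 < K0" "\<And>a b. alpha_err \<mu> \<nu> R g C L s (s - c) a b \<le> K0 * exp (- A * b)"
    using alpha_err_exponential[OF W0 C R sup0 \<delta>(1,2)] unfolding A_def by blast
  obtain K1 where K1: "0 < K1"
    "\<And>a b. alpha_err \<nu> \<mu> R (\<lambda>\<theta>. g (1 - \<theta>)) C (\<lambda>x. - L x) s (s - c) a b \<le> K1 * exp (- A * b)"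
    using alpha_err_exponential[OF W1 C R sup1 \<delta>(1,2)] unfolding A_def by blast
  obtain D0 where D0:
    "\<And>a b. 0 \<le> a \<Longrightarrow> exp_T \<mu> \<nu> R g C L s (s - c) a b 0 \<le> ennreal (a / (- (\<integral>x. L x \<partial>\<nu>) - \<delta>) + D0)"
    using exp_T_0_linear[OF W0 C R sup0 \<delta>(1)] \<delta>(3) by auto
  obtain D1 where D1: "\<And>a b. 0 \<le> a \<Longrightarrow> exp_T \<nu> \<mu> R (\<lambda>\<theta>. g (1 - \<theta>)) C (\<lambda>x. - L x) s (s - c) a b 0
      \<le> ennreal (a / ((\<integral>x. L x \<partial>\<mu>) - \<delta>) + D1)"
    using exp_T_0_linear[OF W1 C R sup1 \<delta>(1)] \<delta>(3) by auto
  have "ereal (A * (I - \<delta>)) \<le> Liminf at_top (\<lambda>a. perf_ratio \<mu> \<nu> R g C L s (s - c) a a)"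
    unfolding perf_ratio_def Let_def
  proof (rule Liminf_log_ratio_ge)
    show "0 < A" "0 < I - \<delta>" "0 < max K0 K1"
      using C \<delta> K0 K1 by (auto simp: A_def I_def)
    fix a :: real
    show "0 \<le> max (alpha_err \<mu> \<nu> R g C L s (s - c) a a) (beta_err \<mu> \<nu> R g C L s (s - c) a a)"
      by (simp add: alpha_err_def le_max_iff_disj dec_prob_nonneg)
    have "K0 * exp (- A * a) \<le> max K0 K1 * exp (- A * a)" "K1 * exp (- A * a) \<le> max K0 K1 * exp (- A * a)"
      by (intro mult_right_mono; simp)+
    then show "max (alpha_err \<mu> \<nu> R g C L s (s - c) a a) (beta_err \<mu> \<nu> R g C L s (s - c) a a)
        \<le> max K0 K1 * exp (- A * a)"
      unfolding beta_err_swap using K0(2)[of a a] K1(2)[of a a] by (intro max.boundedI) linarith+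
    assume a: "0 \<le> a"
    have "a / (- (\<integral>x. L x \<partial>\<nu>) - \<delta>) + D0 \<le> a / (I - \<delta>) + max D0 D1"
      "a / ((\<integral>x. L x \<partial>\<mu>) - \<delta>) + D1 \<le> a / (I - \<delta>) + max D0 D1"
      using a \<delta>(3) by (auto intro!: add_mono divide_left_mono simp: I_def)
    then show "delay \<mu> \<nu> R g C L s (s - c) a a \<le> ennreal (a / (I - \<delta>) + max D0 D1)"
      unfolding delay_def exp_T_swap
      using order_trans[OF D0[OF a] ennreal_leI] order_trans[OF D1[OF a] ennreal_leI]
      by (intro max.boundedI) blast+
  qed
  then show ?thesis
    by (simp add: A_def I_def mult.assoc)
qed

theorem theorem3:
  fixes \<mu> \<nu> :: "real measure" and L :: "real \<Rightarrow> real"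
    and s c :: nat and C :: "nat set"
    and R :: "'r measure"
    and g :: "nat \<Rightarrow> nat \<Rightarrow> (nat \<Rightarrow> nat \<Rightarrow> real) \<Rightarrow> (nat \<Rightarrow> nat \<Rightarrow> real) \<Rightarrow> 'r \<Rightarrow> (nat \<Rightarrow> real)"
  assumes "prob_space \<nu>" and "sets \<nu> = sets borel"
    and "prob_space \<mu>" and "sets \<mu> = sets borel"
    and "absolutely_continuous \<nu> \<mu>" and "absolutely_continuous \<mu> \<nu>"
    and "L \<in> borel_measurable borel"
    and "\<mu> = density \<nu> (\<lambda>x. ennreal (exp (L x)))"
    and "integrable \<mu> L" and "integrable \<nu> L"
    and "0 < (\<integral>x. L x \<partial>\<mu>)" and "0 < - (\<integral>x. L x \<partial>\<nu>)"
    and "2 * c < s" and "C \<subseteq> {1..s}" and "card C = c"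
    and "prob_space R"
    and "measurable_attack R g"
    and "\<forall>\<theta>\<in>{0,1}. AE z in sample_space \<mu> \<nu> R \<theta>. attack_support g \<theta> C (fst z) (snd z) = C"
  shows "ereal ((real s - 2 * real c) * min (- (\<integral>x. L x \<partial>\<nu>)) (\<integral>x. L x \<partial>\<mu>))
           \<le> Liminf at_top (\<lambda>a::real. perf_ratio \<mu> \<nu> R g C L s (s - c) a a)"
proof -
  define I where "I = min (- (\<integral>x. L x \<partial>\<nu>)) (\<integral>x. L x \<partial>\<mu>)"
  have "0 < I"
    using assms(11,12) by (simp add: I_def)
  have W0: "llr_walk \<nu> L"
    using assms(12) by (intro llr_walk_null[OF assms(1,2,3,7,8,10)]) simp
  have W1: "llr_walk \<mu> (\<lambda>x. - L x)"
    by (rule llr_walk_alternative[OF assms(1-4,7-9,11)])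
  have "((\<lambda>\<delta>. ereal (real (s - 2 * c) * (1 - \<delta>) * (I - \<delta>))) \<longlongrightarrow> ereal (real (s - 2 * c) * I)) (at_right 0)"
    by (intro tendsto_ereal) real_asymp
  moreover have "eventually (\<lambda>\<delta>. ereal (real (s - 2 * c) * (1 - \<delta>) * (I - \<delta>))
      \<le> Liminf at_top (\<lambda>a. perf_ratio \<mu> \<nu> R g C L s (s - c) a a)) (at_right 0)"
    using \<open>0 < I\<close> unfolding I_def
    by (intro eventually_at_rightI[of 0 "min 1 I"] perf_ratio_Liminf_ge[OF W0 W1 assms(14,15,13,16,18)])
       (auto simp: I_def)
  ultimately have "ereal (real (s - 2 * c) * I) \<le> Liminf at_top (\<lambda>a. perf_ratio \<mu> \<nu> R g C L s (s - c) a a)"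
    by (rule tendsto_upperbound) simp
  then show ?thesis
    using assms(13) by (simp add: I_def)
qed

end
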